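(* Let $\mathcal{X},\mathcal{Y},\mathcal{U},\mathcal{Z}$ be finite sets, $(X,Y)$ with joint distribution $P_{X,Y}$ on $\mathcal{X}\times\mathcal{Y}$ ($P_X,P_Y$ full support), $f:\mathcal{X}\times\mathcal{Y}\to\mathcal{U}$, $g:\mathcal{Y}\to\mathcal{Z}$, and let $Z^n=(g(Y_t))_{t\le n}$ where $(X^n,Y^n)$ are $n$ i.i.d. copies of $(X,Y)$. Then, as $n\to\infty$, $$H_\chi(G_{[n]})=\inf_{c\in\mathcal{S}_n}H\big(c(X^n,Z^n)\big)+O(\log n).$$
   Context: A probabilistic graph is $(\mathcal{V},\mathcal{E},P_V)$ with a distribution on vertices; a coloring is a map $c$ from $\mathcal{V}$ to a finite set such that adjacent vertices receive different colors; $H_\chi(G)=\inf\{H(c(V)): c\text{ coloring of }G\}$ with $V\sim P_V$. The characteristic graph $G_{[n]}$ has vertex set $\mathcal{X}^n\times\mathcal{Z}^n$ with distribution of $(X^n,Z^n)$, and $(x^n,z^n)$, $(x'^n,z'^n)$ are adjacent iff $z^n=z'^n$ and there is $y^n$ with $g(y_t)=z_t$ for all $t$ such that $P_{X,Y}(x_t,y_t)P_{X,Y}(x'_t,y_t)>0$ for all $t\le n$ and $f(x_t,y_t)\ne f(x'_t,y_t)$ for some $t$. For $z^n\in\mathcal{Z}^n$, $T_{z^n}$ is its type (empirical distribution). $\mathcal{S}_n$ is the set of colorings of $G_{[n]}$ of the form $(x^n,z^n)\mapsto(T_{z^n},\tilde c(x^n,z^n))$ for some map $\tilde c$ from $\mathcal{X}^n\times\mathcal{Z}^n$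 into a finite set. *)

theory Defs
  imports "HOL-Probability.Probability" "HOL-Library.Landau_Symbols"
begin

definition vertices :: "nat \<Rightarrow> ('x list \<times> 'z list) set" where
  "vertices n = {(xs, zs). length xs = n \<and> length zs = n}"

definition char_adj :: "('x \<times> 'y) pmf \<Rightarrow> ('x \<Rightarrow> 'y \<Rightarrow> 'u) \<Rightarrow> ('y \<Rightarrow> 'z) \<Rightarrow> nat
    \<Rightarrow> ('x list \<times> 'z list) \<Rightarrow> ('x list \<times> 'z list) \<Rightarrow> bool" where
  "char_adj P f g n v w \<longleftrightarrow> v \<in> vertices n \<and> w \<in> vertices n \<and> snd v = snd w \<and>
     (\<exists>ys. length ys = n \<and>
        (\<forall>t<n. g (ys ! t) = snd v ! t \<and> pmf P (fst v ! t, ys ! t) * pmf P (fst w ! t, ys ! t) > 0) \<and>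
        (\<exists>t<n. f (fst v ! t) (ys ! t) \<noteq> f (fst w ! t) (ys ! t)))"

text \<open>Probability of the vertex (x^n, z^n) under (X^n, Z^n), with (X_t,Y_t) i.i.d. ~ P and Z_t = g(Y_t).\<close>
definition vprob :: "('x \<times> 'y) pmf \<Rightarrow> ('y \<Rightarrow> 'z) \<Rightarrow> nat \<Rightarrow> ('x list \<times> 'z list) \<Rightarrow> real" where
  "vprob P g n v = (\<Sum>ys | length ys = n \<and> map g ys = snd v. \<Prod>t<n. pmf P (fst v ! t, ys ! t))"

definition is_coloring :: "('x \<times> 'y) pmf \<Rightarrow> ('x \<Rightarrow> 'y \<Rightarrow> 'u) \<Rightarrow> ('y \<Rightarrow> 'z) \<Rightarrow> nat
    \<Rightarrow> ('x list \<times> 'z list \<Rightarrow> 'c) \<Rightarrow> bool" where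
  "is_coloring P f g n c \<longleftrightarrow> finite (c ` vertices n) \<and>
     (\<forall>v w. char_adj P f g n v w \<longrightarrow> c v \<noteq> c w)"

definition col_entropy :: "('x \<times> 'y) pmf \<Rightarrow> ('y \<Rightarrow> 'z) \<Rightarrow> nat \<Rightarrow> ('x list \<times> 'z list \<Rightarrow> 'c) \<Rightarrow> real" where
  "col_entropy P g n c =
     - (\<Sum>k \<in> c ` vertices n.
          let q = (\<Sum>v \<in> vertices n. if c v = k then vprob P g n v else 0) in q * log 2 q)"

text \<open>Chromatic entropy H_chi(G_[n]); colors are taken in nat (any finite color set embeds).\<close>
definition Hchi :: "('x \<times> 'y) pmf \<Rightarrow> ('x \<Rightarrow> 'y \<Rightarrow> 'u) \<Rightarrow> ('y \<Rightarrow> 'z) \<Rightarrow> nat \<Rightarrow> real" where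
  "Hchi P f g n = Inf {col_entropy P g n c | c :: 'x list \<times> 'z list \<Rightarrow> nat. is_coloring P f g n c}"

definition type_of :: "'z list \<Rightarrow> 'z \<Rightarrow> real" where
  "type_of zs = (\<lambda>a. real (count_list zs a) / real (length zs))"

definition S_col :: "('x \<times> 'y) pmf \<Rightarrow> ('x \<Rightarrow> 'y \<Rightarrow> 'u) \<Rightarrow> ('y \<Rightarrow> 'z) \<Rightarrow> nat
    \<Rightarrow> ('x list \<times> 'z list \<Rightarrow> ('z \<Rightarrow> real) \<times> nat) set" where
  "S_col P f g n = {c. is_coloring P f g n c \<and>
      (\<exists>ct :: 'x list \<times> 'z list \<Rightarrow> nat. \<forall>v \<in> vertices n. c v = (type_of (snd v), ct v))}"

definition HS :: "('x \<times> 'y) pmf \<Rightarrow> ('x \<Rightarrow> 'y \<Rightarrow> 'u) \<Rightarrow> ('y \<Rightarrow> 'z) \<Rightarrow> nat \<Rightarrow> real" where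
  "HS P f g n = Inf (col_entropy P g n ` S_col P f g n)"

end

theory Submission
  imports Defs "HOL-Real_Asymp.Real_Asymp"
begin

text \<open>Both infima range over essentially the same colorings. A coloring in S_n is a coloring
  of G_[n] (after injectively relabelling its finitely many colors into nat), so
  H_chi(G_[n]) <= inf_{S_n} H. Conversely, any coloring c yields the coloring
  (T_{z^n}, c) in S_n, and appending a label with at most N values raises the entropy by at
  most log N. There are at most (n+1)^|Z| types of sequences z^n, so the gap is at most
  |Z| log (n+1) = O(log n).\<close>

lemma mult_ln_ge_tangent:
  fixes a m :: real
  assumes "0 \<le> a" and "0 < m"
  shows "a * ln m + a - m \<le> a * ln a"
proof (cases "a = 0")
  case False
  then have a: "0 < a" using assms(1) by simp
  have "a * ln (m / a) \<le> a * (m / a - 1)"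
    using a assms(2) by (intro mult_left_mono ln_le_minus_one) auto
  also have "a * (m / a - 1) = m - a" using a by (simp add: field_simps)
  finally show ?thesis using a assms(2) by (simp add: ln_div algebra_simps)
qed (use assms in simp)

lemma sum_mult_ln_ge:
  fixes a :: "'i \<Rightarrow> real"
  assumes "finite I" and nonneg: "\<And>i. i \<in> I \<Longrightarrow> 0 \<le> a i"
  shows "sum a I * ln (sum a I) - sum a I * ln (card I) \<le> (\<Sum>i\<in>I. a i * ln (a i))"
proof (cases "sum a I = 0")
  case True
  then have "\<forall>i\<in>I. a i = 0" using sum_nonneg_eq_0_iff[OF \<open>finite I\<close>] nonneg by blast
  with True show ?thesis by simp
next
  case False
  define s N where "s = sum a I" and "N = real (card I)"
  have "0 < s" using False nonneg sum_nonneg[of I a] unfolding s_def by force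
  moreover have "0 < N" using False \<open>finite I\<close> unfolding N_def by (auto simp: card_gt_0_iff)
  ultimately have "(\<Sum>i\<in>I. a i * ln (s / N) + a i - s / N) \<le> (\<Sum>i\<in>I. a i * ln (a i))"
    by (intro sum_mono mult_ln_ge_tangent nonneg) auto
  also have "(\<Sum>i\<in>I. a i * ln (s / N) + a i - s / N) = s * ln (s / N)"
    using \<open>0 < N\<close> by (simp add: sum.distrib sum_subtractf sum_distrib_right[symmetric] s_def N_def)
  finally show ?thesis using \<open>0 < s\<close> \<open>0 < N\<close> by (simp add: ln_div right_diff_distrib s_def N_def)
qed

lemma sum_mult_log_ge:
  fixes a :: "'i \<Rightarrow> real"
  assumes "finite I" and "\<And>i. i \<in> I \<Longrightarrow> 0 \<le> a i"
  shows "sum a I * log 2 (sum a I) - sum a I * log 2 (card I) \<le> (\<Sum>i\<in>I. a i * log 2 (a i))"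
proof -
  have "(sum a I * ln (sum a I) - sum a I * ln (card I)) / ln 2 \<le> (\<Sum>i\<in>I. a i * ln (a i)) / ln 2"
    using sum_mult_ln_ge[OF assms] by (simp add: divide_right_mono)
  then show ?thesis by (simp add: log_def sum_divide_distrib diff_divide_distrib)
qed

definition label_mass :: "'v set \<Rightarrow> ('v \<Rightarrow> real) \<Rightarrow> ('v \<Rightarrow> 'c) \<Rightarrow> 'c \<Rightarrow> real" where
  "label_mass V w c k = sum w {v \<in> V. c v = k}"

definition label_entropy :: "'v set \<Rightarrow> ('v \<Rightarrow> real) \<Rightarrow> ('v \<Rightarrow> 'c) \<Rightarrow> real" where
  "label_entropy V w c = - (\<Sum>k \<in> c ` V. label_mass V w c k * log 2 (label_mass V w c k))"

lemma label_mass_nonneg: "(\<And>v. v \<in> V \<Longrightarrow> 0 \<le> w v) \<Longrightarrow> 0 \<le> label_mass V w c k"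
  unfolding label_mass_def by (intro sum_nonneg) auto

lemma sum_label_mass: "finite V \<Longrightarrow> (\<Sum>k \<in> c ` V. label_mass V w c k) = sum w V"
  unfolding label_mass_def by (rule sum.image_gen[symmetric])

lemma label_entropy_nonneg:
  assumes "finite V" and nonneg: "\<And>v. v \<in> V \<Longrightarrow> 0 \<le> w v" and "sum w V \<le> 1"
  shows "0 \<le> label_entropy V w c"
proof -
  have "label_mass V w c k * log 2 (label_mass V w c k) \<le> 0" for k
  proof -
    have "0 \<le> label_mass V w c k" by (rule label_mass_nonneg) (rule nonneg)
    moreover have "label_mass V w c k \<le> sum w V"
      unfolding label_mass_def using assms by (intro sum_mono2) auto
    ultimately show ?thesis using \<open>sum w V \<le> 1\<close>
      by (cases "label_mass V w c k = 0") (auto intro!: mult_nonneg_nonpos)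
  qed
  then show ?thesis unfolding label_entropy_def by (simp add: sum_nonpos)
qed

lemma label_entropy_comp_inj:
  assumes inj: "inj_on h (c ` V)"
  shows "label_entropy V w (h \<circ> c) = label_entropy V w c"
proof -
  have "label_mass V w (h \<circ> c) (h k) = label_mass V w c k" if "k \<in> c ` V" for k
  proof -
    have "{v \<in> V. h (c v) = h k} = {v \<in> V. c v = k}"
      using inj that by (auto dest: inj_onD)
    then show ?thesis unfolding label_mass_def by simp
  qed
  then show ?thesis
    unfolding label_entropy_def image_comp[symmetric] sum.reindex[OF inj] by simp
qed

text \<open>Within each class of c the refined labelling splits the mass of that class into at
  most |a(V)| parts, so the log-sum inequality applies class by class.\<close>
lemma label_entropy_pair_le:
  assumes "finite V" and nonneg: "\<And>v. v \<in> V \<Longrightarrow> 0 \<le> w v"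
  shows "label_entropy V w (\<lambda>v. (a v, c v)) \<le> label_entropy V w c + sum w V * log 2 (card (a ` V))"
proof -
  define p where "p = (\<lambda>v. (a v, c v))"
  define E where "E k = {q \<in> p ` V. snd q = k}" for k
  define H where "H x = x * log 2 x" for x :: real
  define L where "L = log 2 (card (a ` V))"
  have mass_nonneg: "0 \<le> label_mass V w d k" for d k
    by (rule label_mass_nonneg) (rule nonneg)
  have fibre_mass: "(\<Sum>q \<in> E k. label_mass V w p q) = label_mass V w c k" for k
  proof -
    have "p ` {v \<in> V. c v = k} = E k" unfolding E_def p_def by auto
    moreover have "{v \<in> {v \<in> V. c v = k}. p v = q} = {v \<in> V. p v = q}" if "q \<in> E k" for q
      using that unfolding E_def p_def by auto
    ultimately show ?thesis
      using sum.image_gen[of "{v \<in> V. c v = k}" w p] \<open>finite V\<close> unfolding label_mass_def by simp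
  qed
  have fibre_bound: "- (\<Sum>q \<in> E k. H (label_mass V w p q)) \<le> - H (label_mass V w c k) + label_mass V w c k * L"
    if "k \<in> c ` V" for k
  proof -
    have fin: "finite (E k)" unfolding E_def using \<open>finite V\<close> by simp
    have "0 < card (E k)" using that fin unfolding E_def p_def by (auto simp: card_gt_0_iff)
    moreover have "card (E k) \<le> card (a ` V)"
      using \<open>finite V\<close> by (intro card_inj_on_le[of fst]) (auto simp: E_def p_def inj_on_def)
    ultimately have "label_mass V w c k * log 2 (card (E k)) \<le> label_mass V w c k * L"
      unfolding L_def by (intro mult_left_mono mass_nonneg) auto
    moreover have "H (label_mass V w c k) - label_mass V w c k * log 2 (card (E k))
        \<le> (\<Sum>q \<in> E k. H (label_mass V w p q))"
      using sum_mult_log_ge[OF fin, of "label_mass V w p", OF mass_nonneg] unfolding fibre_mass H_def .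
    ultimately show ?thesis by linarith
  qed
  have "(\<Sum>q \<in> p ` V. H (label_mass V w p q))
      = (\<Sum>k \<in> snd ` p ` V. \<Sum>q \<in> {q \<in> p ` V. snd q = k}. H (label_mass V w p q))"
    using \<open>finite V\<close> by (intro sum.image_gen) simp
  also have "snd ` p ` V = c ` V" unfolding p_def by (simp add: image_comp comp_def)
  finally have "label_entropy V w p = - (\<Sum>k \<in> c ` V. \<Sum>q \<in> E k. H (label_mass V w p q))"
    unfolding label_entropy_def E_def H_def by simp
  also have "\<dots> \<le> (\<Sum>k \<in> c ` V. - H (label_mass V w c k) + label_mass V w c k * L)"
    unfolding sum_negf[symmetric] using fibre_bound by (intro sum_mono) (simp add: sum_negf)
  also have "\<dots> = label_entropy V w c + sum w V * L"
    unfolding label_entropy_def H_def sum.distrib sum_negf sum_distrib_right[symmetric]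
    using sum_label_mass[OF \<open>finite V\<close>, of w c] by simp
  finally show ?thesis unfolding p_def L_def .
qed

lemma finite_vertices [simp]: "finite (vertices n :: ('x::finite list \<times> 'z::finite list) set)"
proof -
  have "vertices n = {xs :: 'x list. length xs = n} \<times> {zs :: 'z list. length zs = n}"
    unfolding vertices_def by auto
  then show ?thesis by (simp add: finite_list_length)
qed

lemma sum_lists_length_Suc:
  fixes h :: "'a::finite list \<Rightarrow> 'b::comm_monoid_add"
  shows "(\<Sum>xs | length xs = Suc n. h xs) = (\<Sum>x\<in>UNIV. \<Sum>xs | length xs = n. h (x # xs))"
proof -
  have "{xs :: 'a list. length xs = Suc n} = case_prod (#) ` (UNIV \<times> {xs. length xs = n})"
    by (auto simp: length_Suc_conv image_iff)
  moreover have "inj_on (case_prod (#)) (UNIV \<times> {xs :: 'a list. length xs = n})"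
    by (auto simp: inj_on_def)
  ultimately show ?thesis by (simp add: sum.reindex sum.cartesian_product case_prod_unfold)
qed

lemma sum_prod_lists_length:
  fixes F :: "'a::finite \<Rightarrow> 'b::finite \<Rightarrow> 'c::comm_semiring_1"
  shows "(\<Sum>xs | length xs = n. \<Sum>ys | length ys = n. \<Prod>t<n. F (xs ! t) (ys ! t))
     = (\<Sum>x\<in>UNIV. \<Sum>y\<in>UNIV. F x y) ^ n"
proof (induction n)
  case (Suc n)
  have "(\<Sum>xs | length xs = Suc n. \<Sum>ys | length ys = Suc n. \<Prod>t<Suc n. F (xs ! t) (ys ! t))
     = (\<Sum>x\<in>UNIV. \<Sum>xs | length xs = n. \<Sum>y\<in>UNIV. \<Sum>ys | length ys = n.
          F x y * (\<Prod>t<n. F (xs ! t) (ys ! t)))"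
    by (simp add: sum_lists_length_Suc prod.lessThan_Suc_shift del: prod.lessThan_Suc)
  also have "\<dots> = (\<Sum>x\<in>UNIV. \<Sum>y\<in>UNIV. F x y)
      * (\<Sum>xs | length xs = n. \<Sum>ys | length ys = n. \<Prod>t<n. F (xs ! t) (ys ! t))"
    by (simp only: sum_product)
  also have "\<dots> = (\<Sum>x\<in>UNIV. \<Sum>y\<in>UNIV. F x y) ^ Suc n"
    by (simp add: Suc.IH)
  finally show ?case .
qed simp

lemma vprob_nonneg: "0 \<le> vprob P g n v"
  unfolding vprob_def by (intro sum_nonneg prod_nonneg) auto

lemma sum_vprob_vertices:
  fixes P :: "('x::finite \<times> 'y::finite) pmf" and g :: "'y \<Rightarrow> 'z::finite"
  shows "sum (vprob P g n) (vertices n) = 1"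
proof -
  define F where "F xs ys = (\<Prod>t<n. pmf P (xs ! t, ys ! t))" for xs ys
  have "sum (vprob P g n) (vertices n)
      = (\<Sum>xs | length xs = n. \<Sum>zs | length zs = n. \<Sum>ys | length ys = n \<and> map g ys = zs. F xs ys)"
    unfolding vertices_def vprob_def F_def Collect_case_prod[symmetric] sum.cartesian_product
    by (rule sum.cong) auto
  also have "\<dots> = (\<Sum>xs | length xs = n. \<Sum>ys | length ys = n. F xs ys)"
  proof (rule sum.cong[OF refl])
    fix xs
    show "(\<Sum>zs | length zs = n. \<Sum>ys | length ys = n \<and> map g ys = zs. F xs ys)
        = (\<Sum>ys | length ys = n. F xs ys)"
      using sum.group[of "{ys. length ys = n}" "{zs. length zs = n}" "map g" "F xs"]
      by (simp add: finite_list_length image_subset_iff)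
  qed
  also have "\<dots> = (\<Sum>x\<in>UNIV. \<Sum>y\<in>UNIV. pmf P (x, y)) ^ n"
    unfolding F_def by (rule sum_prod_lists_length)
  also have "(\<Sum>x\<in>UNIV. \<Sum>y\<in>UNIV. pmf P (x, y)) = 1"
    using sum_pmf_eq_1[of UNIV P] by (simp add: sum.cartesian_product case_prod_unfold)
  finally show ?thesis by simp
qed

lemma card_types_le:
  "card (type_of ` {zs :: 'z::finite list. length zs = n}) \<le> (n + 1) ^ CARD('z)"
proof -
  define M where "M = (UNIV :: 'z set) \<rightarrow>\<^sub>E {..n}"
  have sub: "type_of ` {zs :: 'z list. length zs = n} \<subseteq> (\<lambda>\<phi> a. real (\<phi> a) / real n) ` M"
    unfolding type_of_def M_def by (auto simp: PiE_UNIV_domain count_le_length)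
  have "card (type_of ` {zs :: 'z list. length zs = n}) \<le> card ((\<lambda>\<phi> a. real (\<phi> a) / real n) ` M)"
    by (rule card_mono[OF _ sub]) (simp add: M_def finite_PiE)
  also have "\<dots> \<le> card M" by (rule card_image_le) (simp add: M_def finite_PiE)
  also have "card M = (n + 1) ^ CARD('z)" unfolding M_def by (simp add: card_PiE)
  finally show ?thesis .
qed

lemma char_adj_vertices: "char_adj P f g n v w \<Longrightarrow> v \<in> vertices n \<and> w \<in> vertices n"
  unfolding char_adj_def by blast

lemma char_adj_irrefl: "\<not> char_adj P f g n v v"
  unfolding char_adj_def by blast

lemma is_coloring_inj_on:
  fixes c :: "'x::finite list \<times> 'z::finite list \<Rightarrow> 'c"
  assumes "inj_on c (vertices n)"
  shows "is_coloring P f g n c"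
  unfolding is_coloring_def using assms char_adj_vertices char_adj_irrefl
  by (metis finite_imageI finite_vertices inj_on_contraD)

lemma is_coloring_comp_inj_on:
  assumes "is_coloring P f g n c" and "inj_on h (c ` vertices n)"
  shows "is_coloring P f g n (h \<circ> c)"
  using assms char_adj_vertices unfolding is_coloring_def
  by (metis comp_apply finite_imageI image_comp image_eqI inj_on_eq_iff)

lemma type_pair_coloring_in_S_col:
  fixes c :: "'x::finite list \<times> 'z::finite list \<Rightarrow> nat"
  assumes "is_coloring P f g n c"
  shows "(\<lambda>v. (type_of (snd v), c v)) \<in> S_col P f g n"
  using assms unfolding S_col_def is_coloring_def by auto

lemma ex_coloring:
  "\<exists>c :: 'x::finite list \<times> 'z::finite list \<Rightarrow> nat. is_coloring P f g n c"
  using is_coloring_inj_on inj_on_to_nat_on[OF countable_finite[OF finite_vertices]] by blast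

lemma col_entropy_eq_label_entropy:
  fixes P :: "('x::finite \<times> 'y) pmf" and g :: "'y \<Rightarrow> 'z::finite"
  shows "col_entropy P g n c = label_entropy (vertices n) (vprob P g n) c"
  unfolding col_entropy_def label_entropy_def label_mass_def Let_def
  by (simp add: sum.inter_filter)

lemma col_entropy_nonneg:
  fixes P :: "('x::finite \<times> 'y::finite) pmf" and g :: "'y \<Rightarrow> 'z::finite"
  shows "0 \<le> col_entropy P g n c"
  unfolding col_entropy_eq_label_entropy
  by (rule label_entropy_nonneg) (simp_all add: vprob_nonneg sum_vprob_vertices)

lemma Hchi_le_HS:
  fixes P :: "('x::finite \<times> 'y::finite) pmf" and g :: "'y \<Rightarrow> 'z::finite"
  shows "Hchi P f g n \<le> HS P f g n"
  unfolding Hchi_def HS_def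
proof (rule cInf_mono)
  obtain c :: "_ \<Rightarrow> nat" where "is_coloring P f g n c" using ex_coloring by blast
  then show "col_entropy P g n ` S_col P f g n \<noteq> {}" using type_pair_coloring_in_S_col by blast
  show "bdd_below {col_entropy P g n c |c :: _ \<Rightarrow> nat. is_coloring P f g n c}"
    by (auto intro!: bdd_belowI[of _ 0] col_entropy_nonneg)
next
  fix b assume "b \<in> col_entropy P g n ` S_col P f g n"
  then obtain c :: "'x list \<times> 'z list \<Rightarrow> ('z \<Rightarrow> real) \<times> nat"
    where c: "is_coloring P f g n c" and b: "b = col_entropy P g n c"
    unfolding S_col_def by auto
  define h where "h = to_nat_on (c ` vertices n)"
  have "inj_on h (c ` vertices n)"
    unfolding h_def by (intro inj_on_to_nat_on countable_finite finite_imageI finite_vertices)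
  then have "is_coloring P f g n (h \<circ> c)" and "col_entropy P g n (h \<circ> c) = b"
    using is_coloring_comp_inj_on[OF c] label_entropy_comp_inj
    by (auto simp: b col_entropy_eq_label_entropy)
  then show "\<exists>a \<in> {col_entropy P g n c |c :: _ \<Rightarrow> nat. is_coloring P f g n c}. a \<le> b" by auto
qed

lemma HS_le_Hchi_add_log:
  fixes P :: "('x::finite \<times> 'y::finite) pmf" and g :: "'y \<Rightarrow> 'z::finite"
  shows "HS P f g n \<le> Hchi P f g n + CARD('z) * log 2 (real n + 1)"
proof -
  define L :: real where "L = CARD('z) * log 2 (real n + 1)"
  define V :: "('x list \<times> 'z list) set" where "V = vertices n"
  define T where "T = (\<lambda>v. type_of (snd v)) ` V"
  have log_card_T: "log 2 (card T) \<le> L"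
  proof -
    have "(replicate n undefined, replicate n undefined) \<in> V" unfolding V_def vertices_def by simp
    then have "0 < card T" by (auto simp: card_gt_0_iff T_def V_def)
    moreover have "card T \<le> card (type_of ` {zs :: 'z list. length zs = n})"
      unfolding T_def by (intro card_mono) (auto simp: V_def vertices_def finite_list_length)
    with card_types_le[of n, where 'z='z] have "real (card T) \<le> real ((n + 1) ^ CARD('z))"
      by linarith
    ultimately have "log 2 (card T) \<le> log 2 ((real n + 1) ^ CARD('z))"
      by (simp add: add.commute)
    also have "\<dots> = L" unfolding L_def by (simp add: log_nat_power)
    finally show ?thesis .
  qed
  have "HS P f g n - L \<le> col_entropy P g n c" if "is_coloring P f g n c" for c :: "_ \<Rightarrow> nat"
  proof -
    have "HS P f g n \<le> col_entropy P g n (\<lambda>v. (type_of (snd v), c v))"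
      unfolding HS_def using type_pair_coloring_in_S_col[OF that]
      by (intro cInf_lower) (auto intro!: bdd_belowI[of _ 0] col_entropy_nonneg)
    also have "\<dots> \<le> col_entropy P g n c + L"
      using label_entropy_pair_le[of V "vprob P g n" "\<lambda>v. type_of (snd v)" c] log_card_T
      by (simp add: T_def V_def col_entropy_eq_label_entropy vprob_nonneg sum_vprob_vertices)
    finally show ?thesis by simp
  qed
  then have "HS P f g n - L \<le> Hchi P f g n"
    unfolding Hchi_def using ex_coloring by (intro cInf_greatest) auto
  then show ?thesis unfolding L_def by simp
qed

theorem lemma1:
  fixes P :: "('x::finite \<times> 'y::finite) pmf"
    and f :: "'x \<Rightarrow> 'y \<Rightarrow> 'u::finite"
    and g :: "'y \<Rightarrow> 'z::finite"
  assumes "\<forall>x. \<exists>y. pmf P (x, y) > 0"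
    and "\<forall>y. \<exists>x. pmf P (x, y) > 0"
  shows "(\<lambda>n. HS P f g n - Hchi P f g n) \<in> O(\<lambda>n. ln (real n))"
proof -
  have "(\<lambda>n. HS P f g n - Hchi P f g n) \<in> O(\<lambda>n. CARD('z) * log 2 (real n + 1))"
  proof (intro landau_o.big_mono always_eventually allI)
    fix n
    show "norm (HS P f g n - Hchi P f g n) \<le> norm (CARD('z) * log 2 (real n + 1))"
      using Hchi_le_HS[of P f g n] HS_le_Hchi_add_log[of P f g n] by simp
  qed
  also have "(\<lambda>n::nat. CARD('z) * log 2 (real n + 1)) \<in> O(\<lambda>n. ln (real n))"
    by real_asymp
  finally show ?thesis .
qed

end
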